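(* Let $d\ge2$ and $\gamma>3/4$. Then $\Lambda_0(\gamma,d)>\frac{(d-1)(\gamma-\frac34)}{2(\gamma-\frac14)\,\mathsf N_0(\gamma)^{\frac{4\gamma}{4\gamma-1}}-2(\gamma-\frac34)}$.
   Context: $\mathsf N_0(\gamma)=2^{1-\frac3{4\gamma}}e^{\frac1{4\gamma}}\frac{(2\gamma-1)^{1-\frac1\gamma}}{(4\gamma-1)^{1-\frac3{4\gamma}}}\Big(\frac{\Gamma(2\gamma-\frac12)}{\Gamma(2\gamma-1)}\Big)^{\frac1{2\gamma}}$; $\beta_0=1-\frac1{4\gamma}$; $\mathsf x_0^*(\gamma)$ is the smallest root $x>\mathsf N_0^{1/\beta_0}$ of $4\gamma x^{\beta_0+1}-(8\gamma-3)\mathsf N_0x+(4\gamma-3)\mathsf N_0=0$ with $\mathsf N_0=\mathsf N_0(\gamma)$; $\Lambda_0(\gamma,d)=\frac{(d-1)(\gamma-3/4)}{\mathsf x_0^*(\gamma)}$. *)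

theory Defs
  imports "HOL-Analysis.Analysis"
begin

definition N0 :: "real \<Rightarrow> real" where
  "N0 \<gamma> = 2 powr (1 - 3 / (4 * \<gamma>)) * exp (1 / (4 * \<gamma>))
      * (2 * \<gamma> - 1) powr (1 - 1 / \<gamma>) / (4 * \<gamma> - 1) powr (1 - 3 / (4 * \<gamma>))
      * (Gamma (2 * \<gamma> - 1 / 2) / Gamma (2 * \<gamma> - 1)) powr (1 / (2 * \<gamma>))"

definition beta0 :: "real \<Rightarrow> real" where
  "beta0 \<gamma> = 1 - 1 / (4 * \<gamma>)"

definition x0star :: "real \<Rightarrow> real" where
  "x0star \<gamma> = Inf {x. x > N0 \<gamma> powr (1 / beta0 \<gamma>) \<and>
      4 * \<gamma> * x powr (beta0 \<gamma> + 1) - (8 * \<gamma> - 3) * N0 \<gamma> * x + (4 * \<gamma> - 3) * N0 \<gamma> = 0}"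

definition Lambda0 :: "real \<Rightarrow> nat \<Rightarrow> real" where
  "Lambda0 \<gamma> d = (real d - 1) * (\<gamma> - 3 / 4) / x0star \<gamma>"

end

theory Submission
  imports Defs
begin

text \<open>
  Write \<open>a = N\<^sub>0\<^bsup>1/\<beta>\<^sub>0\<^esup>\<close> and \<open>f(x) = 4\<gamma> x\<^bsup>\<beta>\<^sub>0+1\<^esup> - (8\<gamma>-3) N\<^sub>0 x + (4\<gamma>-3) N\<^sub>0\<close>.
  Log-convexity of \<open>\<Gamma>\<close> gives \<open>N\<^sub>0 > 1\<close>, hence \<open>a > 1\<close>. Since \<open>a\<^bsup>\<beta>\<^sub>0\<^esup> = N\<^sub>0\<close>,
  \<open>f(a) = (4\<gamma>-3) N\<^sub>0 (1 - a) < 0\<close>, while the strict Bernoulli inequality for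
  \<open>(B/a)\<^bsup>\<beta>\<^sub>0+1\<^esup>\<close> gives \<open>f(B) > 0\<close> at \<open>B = 2(\<gamma>-1/4) a - 2(\<gamma>-3/4) > a\<close>, which
  is the denominator in the claim. So \<open>f\<close> has a root in \<open>(a, B)\<close>, whence
  \<open>a \<le> x\<^sub>0\<^sup>* < B\<close> and \<open>\<Lambda>\<^sub>0 = (d-1)(\<gamma>-3/4)/x\<^sub>0\<^sup>* > (d-1)(\<gamma>-3/4)/B\<close>.
\<close>

lemma Gamma_half_shift_ratio_ln_lower:
  fixes x :: real
  assumes x: "x > 0"
  shows "2 * ln x - ln (x + 1/2) \<le> 2 * ln (Gamma (x + 1/2) / Gamma x)"
proof -
  have "(ln \<circ> Gamma) ((1 - 1/2) *\<^sub>R (x + 1/2) + (1/2) *\<^sub>R (x + 3/2))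
     \<le> (1 - 1/2) * (ln \<circ> Gamma) (x + 1/2) + (1/2) * (ln \<circ> Gamma) (x + 3/2)"
    by (rule convex_onD[OF log_convex_Gamma_real]) (use x in auto)
  moreover have "(1 - 1/2) *\<^sub>R (x + 1/2) + (1/2) *\<^sub>R (x + 3/2) = x + 1"
    by (simp add: field_simps)
  ultimately have convex: "2 * ln (Gamma (x + 1)) \<le> ln (Gamma (x + 1/2)) + ln (Gamma (x + 3/2))"
    by simp
  have not_nonpos: "x \<notin> \<int>\<^sub>\<le>\<^sub>0" "x + 1/2 \<notin> \<int>\<^sub>\<le>\<^sub>0"
    using x by (auto elim!: nonpos_Ints_cases)
  have Gamma_pos: "Gamma x > 0" "Gamma (x + 1/2) > 0"
    using x by auto
  have "Gamma (x + 1) = x * Gamma x"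
    using Gamma_plus1[of x] not_nonpos by (simp add: add.commute)
  then have "ln (Gamma (x + 1)) = ln x + ln (Gamma x)"
    using x Gamma_pos by (simp add: ln_mult_pos)
  moreover have "Gamma (x + 3/2) = (x + 1/2) * Gamma (x + 1/2)"
    using Gamma_plus1[of "x + 1/2"] not_nonpos by (simp add: add.commute add.left_commute)
  then have "ln (Gamma (x + 3/2)) = ln (x + 1/2) + ln (Gamma (x + 1/2))"
    using x Gamma_pos by (simp add: ln_mult_pos)
  moreover have "ln (Gamma (x + 1/2) / Gamma x) = ln (Gamma (x + 1/2)) - ln (Gamma x)"
    using Gamma_pos by (simp add: ln_div)
  ultimately show ?thesis
    using convex by linarith
qed

lemma powr_gt_Bernoulli:
  fixes t p :: real
  assumes t: "t > 1" and p: "p > 1"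
  shows "t powr p > 1 + p * (t - 1)"
proof -
  let ?f = "\<lambda>t. t powr p - 1 - p * (t - 1)"
  have "?f 1 < ?f t"
  proof (rule DERIV_pos_imp_increasing_open[OF t])
    fix x :: real
    assume x: "1 < x" "x < t"
    have "DERIV ?f x :> p * x powr (p - 1) - p"
      using x by (auto intro!: derivative_eq_intros has_real_derivative_powr)
    moreover have "x powr (p - 1) > 1"
      using powr_less_mono2[of "p - 1" 1 x] x p by simp
    ultimately show "\<exists>y. DERIV ?f x :> y \<and> 0 < y"
      using p by auto
  qed (intro continuous_intros, auto)
  then show ?thesis
    by simp
qed

lemma N0_pos:
  fixes \<gamma> :: real
  assumes "\<gamma> > 3/4"
  shows "N0 \<gamma> > 0"
proof -
  have "Gamma (2 * \<gamma> - 1/2) / Gamma (2 * \<gamma> - 1) > 0"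
    using assms by (intro divide_pos_pos Gamma_real_pos) auto
  then have "(Gamma (2 * \<gamma> - 1/2) / Gamma (2 * \<gamma> - 1)) powr (1 / (2 * \<gamma>)) > 0"
    by (simp only: powr_gt_zero)
  with assms show ?thesis
    unfolding N0_def by (intro mult_pos_pos divide_pos_pos) auto
qed

lemma ln_N0_eq:
  fixes \<gamma> :: real
  assumes \<gamma>: "\<gamma> > 3/4"
  defines "s \<equiv> 2 * \<gamma> - 1"
  shows "4 * \<gamma> * ln (N0 \<gamma>) = 1 + (4 * \<gamma> - 4) * ln s - (4 * \<gamma> - 3) * ln (s + 1/2)
    + 2 * ln (Gamma (s + 1/2) / Gamma s)"
proof -
  define R where "R = Gamma (s + 1/2) / Gamma s"
  have s: "s > 1/2"
    using \<gamma> s_def by simp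
  have R_pos: "R > 0"
    unfolding R_def using s by auto
  have "ln (4 * \<gamma> - 1) = ln (2 * (s + 1/2))"
    unfolding s_def by simp
  also have "\<dots> = ln 2 + ln (s + 1/2)"
    by (rule ln_mult_pos) (use s in auto)
  finally have ln_4\<gamma>: "ln (4 * \<gamma> - 1) = ln 2 + ln (s + 1/2)" .
  have "N0 \<gamma> = 2 powr (1 - 3 / (4 * \<gamma>)) * exp (1 / (4 * \<gamma>)) * s powr (1 - 1 / \<gamma>)
      / (4 * \<gamma> - 1) powr (1 - 3 / (4 * \<gamma>)) * R powr (1 / (2 * \<gamma>))"
    unfolding N0_def R_def s_def by (simp add: algebra_simps)
  then have ln_N0: "ln (N0 \<gamma>) = (1 - 3 / (4 * \<gamma>)) * ln 2 + 1 / (4 * \<gamma>) + (1 - 1 / \<gamma>) * ln s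
      - (1 - 3 / (4 * \<gamma>)) * ln (4 * \<gamma> - 1) + (1 / (2 * \<gamma>)) * ln R"
    using s R_pos \<gamma> by (simp add: ln_mult ln_div)
  show ?thesis
    unfolding ln_N0 R_def[symmetric] ln_4\<gamma> using \<gamma> by (simp add: field_simps)
qed

lemma N0_gt_1:
  fixes \<gamma> :: real
  assumes \<gamma>: "\<gamma> > 3/4"
  shows "N0 \<gamma> > 1"
proof -
  define s where "s = 2 * \<gamma> - 1"
  have s: "s > 1/2"
    using \<gamma> s_def by simp
  have "(s + 1/2) / s = 1 + 1 / (2 * s)"
    using s by (simp add: field_simps)
  then have "ln (s + 1/2) - ln s = ln (1 + 1 / (2 * s))"
    using s by (simp add: ln_divide_pos[symmetric])
  also have "\<dots> < 1 / (2 * s)"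
    using ln_add_one_self_less_self[of "1 / (2 * s)"] s by simp
  finally have "(4 * \<gamma> - 2) * (ln (s + 1/2) - ln s) < (4 * \<gamma> - 2) * (1 / (2 * s))"
    using \<gamma> by (intro mult_strict_left_mono) auto
  also have "(4 * \<gamma> - 2) * (1 / (2 * s)) = 1"
    unfolding s_def using \<gamma> by (simp add: field_simps)
  finally have "4 * \<gamma> * ln (N0 \<gamma>) > 0"
    using ln_N0_eq[OF \<gamma>] Gamma_half_shift_ratio_ln_lower[of s] s
    unfolding s_def by (simp add: algebra_simps)
  then have "ln (N0 \<gamma>) > 0"
    using \<gamma> by (simp add: zero_less_mult_iff)
  then show ?thesis
    using ln_gt_zero_iff N0_pos[OF \<gamma>] by blast
qed

definition x0star_poly :: "real \<Rightarrow> real \<Rightarrow> real \<Rightarrow> real" where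
  "x0star_poly \<gamma> N x = 4 * \<gamma> * x powr (beta0 \<gamma> + 1) - (8 * \<gamma> - 3) * N * x + (4 * \<gamma> - 3) * N"

lemma x0star_eq_Inf:
  "x0star \<gamma> = Inf {x. x > N0 \<gamma> powr (1 / beta0 \<gamma>) \<and> x0star_poly \<gamma> (N0 \<gamma>) x = 0}"
  unfolding x0star_def x0star_poly_def ..

lemma beta0_pos: "\<gamma> > 3/4 \<Longrightarrow> beta0 \<gamma> > 0"
  unfolding beta0_def by (simp add: field_simps)

lemma x0star_poly_at_threshold:
  assumes "a > 0"
  shows "x0star_poly \<gamma> (a powr beta0 \<gamma>) a = (4 * \<gamma> - 3) * a powr beta0 \<gamma> * (1 - a)"
  using assms unfolding x0star_poly_def by (simp add: powr_add algebra_simps)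

lemma less_x0star_upper:
  fixes \<gamma> a :: real
  assumes "\<gamma> > 3/4" and "a > 1"
  shows "a < 2 * (\<gamma> - 1/4) * a - 2 * (\<gamma> - 3/4)"
proof -
  have "0 < (2 * \<gamma> - 3/2) * (a - 1)"
    using assms by simp
  also have "\<dots> = 2 * (\<gamma> - 1/4) * a - 2 * (\<gamma> - 3/4) - a"
    by (simp add: field_simps)
  finally show ?thesis
    by simp
qed

lemma x0star_poly_pos:
  assumes \<gamma>: "\<gamma> > 3/4" and a: "a > 1"
  defines "B \<equiv> 2 * (\<gamma> - 1/4) * a - 2 * (\<gamma> - 3/4)"
  shows "x0star_poly \<gamma> (a powr beta0 \<gamma>) B > 0"
proof -
  define \<beta> where "\<beta> = beta0 \<gamma>"
  define t where "t = B / a"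
  have t: "t > 1"
    unfolding t_def B_def using less_x0star_upper[OF \<gamma> a] a by simp
  have B_eq: "B = a * t"
    unfolding t_def using a by simp
  have exponent: "4 * \<gamma> * (\<beta> + 1) = 8 * \<gamma> - 1"
    unfolding \<beta>_def beta0_def using \<gamma> by (simp add: field_simps)
  have "t powr (\<beta> + 1) > 1 + (\<beta> + 1) * (t - 1)"
    using powr_gt_Bernoulli[OF t] beta0_pos[OF \<gamma>] unfolding \<beta>_def by simp
  then have "4 * \<gamma> * a * t powr (\<beta> + 1) - (8 * \<gamma> - 3) * a * t + (4 * \<gamma> - 3)
      > 4 * \<gamma> * a * (1 + (\<beta> + 1) * (t - 1)) - (8 * \<gamma> - 3) * a * t + (4 * \<gamma> - 3)"
    using \<gamma> a by simp
  also have "4 * \<gamma> * a * (1 + (\<beta> + 1) * (t - 1)) - (8 * \<gamma> - 3) * a * t + (4 * \<gamma> - 3)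
      = (4 * \<gamma> * (\<beta> + 1) - (8 * \<gamma> - 1)) * a * (t - 1) + 2 * (a * t) - (4 * \<gamma> - 1) * a + (4 * \<gamma> - 3)"
    by (simp add: algebra_simps)
  also have "\<dots> = 0"
    unfolding exponent B_eq[symmetric] B_def by (simp add: algebra_simps)
  finally have inner_pos: "4 * \<gamma> * a * t powr (\<beta> + 1) - (8 * \<gamma> - 3) * a * t + (4 * \<gamma> - 3) > 0" .
  have "x0star_poly \<gamma> (a powr \<beta>) B
      = a powr \<beta> * (4 * \<gamma> * a * t powr (\<beta> + 1) - (8 * \<gamma> - 3) * a * t + (4 * \<gamma> - 3))"
    unfolding x0star_poly_def \<beta>_def[symmetric] B_eq
    using a t by (simp add: powr_mult powr_add algebra_simps)
  then show ?thesis
    using inner_pos a unfolding \<beta>_def by simp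
qed

lemma x0star_poly_root_between:
  assumes \<gamma>: "\<gamma> > 3/4" and a: "a > 1"
  defines "B \<equiv> 2 * (\<gamma> - 1/4) * a - 2 * (\<gamma> - 3/4)"
  obtains r where "a < r" "r < B" "x0star_poly \<gamma> (a powr beta0 \<gamma>) r = 0"
proof -
  let ?f = "x0star_poly \<gamma> (a powr beta0 \<gamma>)"
  have f_a: "?f a < 0"
    using \<gamma> a by (simp add: x0star_poly_at_threshold mult_pos_neg)
  have f_B: "?f B > 0"
    using x0star_poly_pos[OF \<gamma> a] unfolding B_def .
  have "a < B"
    using less_x0star_upper[OF \<gamma> a] unfolding B_def .
  moreover have "continuous_on {a..B} ?f"
    unfolding x0star_poly_def using a by (intro continuous_intros) auto
  ultimately obtain r where "a \<le> r" "r \<le> B" "?f r = 0"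
    using IVT'[of ?f a 0 B] f_a f_B by fastforce
  with f_a f_B show ?thesis
    by (intro that) (auto simp: order.order_iff_strict)
qed

lemma x0star_bounds:
  assumes \<gamma>: "\<gamma> > 3/4"
  defines "a \<equiv> N0 \<gamma> powr (1 / beta0 \<gamma>)"
  shows "a \<le> x0star \<gamma>" and "x0star \<gamma> < 2 * (\<gamma> - 1/4) * a - 2 * (\<gamma> - 3/4)"
proof -
  have a: "a > 1"
    unfolding a_def using N0_gt_1[OF \<gamma>] beta0_pos[OF \<gamma>] by simp
  have "a powr beta0 \<gamma> = N0 \<gamma>"
    unfolding a_def using N0_pos[OF \<gamma>] beta0_pos[OF \<gamma>] by (simp add: powr_powr)
  then obtain r where r: "a < r" "r < 2 * (\<gamma> - 1/4) * a - 2 * (\<gamma> - 3/4)"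
      and root: "x0star_poly \<gamma> (N0 \<gamma>) r = 0"
    using x0star_poly_root_between[OF \<gamma> a] by metis
  define S where "S = {x. x > a \<and> x0star_poly \<gamma> (N0 \<gamma>) x = 0}"
  have x0star_S: "x0star \<gamma> = Inf S"
    unfolding x0star_eq_Inf S_def a_def ..
  have "r \<in> S"
    unfolding S_def using r root by simp
  moreover have "bdd_below S"
    unfolding S_def by (rule bdd_belowI[of _ a]) auto
  ultimately have "x0star \<gamma> \<le> r"
    unfolding x0star_S by (rule cInf_lower)
  then show "x0star \<gamma> < 2 * (\<gamma> - 1/4) * a - 2 * (\<gamma> - 3/4)"
    using r by simp
  show "a \<le> x0star \<gamma>"
    unfolding x0star_S using \<open>r \<in> S\<close> by (intro cInf_greatest) (auto simp: S_def)
qed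

theorem proposition3:
  fixes \<gamma> :: real and d :: nat
  assumes "d \<ge> 2" and "\<gamma> > 3 / 4"
  shows "Lambda0 \<gamma> d > (real d - 1) * (\<gamma> - 3 / 4) /
    (2 * (\<gamma> - 1 / 4) * N0 \<gamma> powr (4 * \<gamma> / (4 * \<gamma> - 1)) - 2 * (\<gamma> - 3 / 4))"
proof -
  have "1 / beta0 \<gamma> = 4 * \<gamma> / (4 * \<gamma> - 1)"
    unfolding beta0_def using assms(2) by (simp add: field_simps)
  then have bounds: "N0 \<gamma> powr (4 * \<gamma> / (4 * \<gamma> - 1)) \<le> x0star \<gamma>"
      "x0star \<gamma> < 2 * (\<gamma> - 1 / 4) * N0 \<gamma> powr (4 * \<gamma> / (4 * \<gamma> - 1)) - 2 * (\<gamma> - 3 / 4)"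
    using x0star_bounds[OF assms(2)] by simp_all
  have "N0 \<gamma> powr (4 * \<gamma> / (4 * \<gamma> - 1)) > 0"
    using N0_pos[OF assms(2)] by simp
  then have x0star_pos: "x0star \<gamma> > 0"
    using bounds(1) by linarith
  have "(real d - 1) * (\<gamma> - 3 / 4) > 0"
    using assms by simp
  from divide_strict_left_mono[OF bounds(2) this mult_pos_pos[OF _ x0star_pos]] x0star_pos bounds
  show ?thesis
    unfolding Lambda0_def by linarith
qed

end
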